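(* For $T\in\mathcal C(\rho)$ let $\psi_T\colon G\times Y\times Y\to\mathbb C$ be $\psi_T(u,v,y)=(TK_{0,y})(u,v)$. Then for every $T\in\mathcal C(\rho)$, $u\in G$ and $v,y\in Y$, \[ \psi_{T^*}(u,v,y)=\overline{(TK_{0,v})(-u,y)}=\overline{\psi_T(-u,y,v)}. \]
   Context: Let $G$ be a locally compact abelian group (written additively) with Haar measure $\nu$, and $(Y,\lambda)$ a measure space. Let $H$ be a reproducing kernel Hilbert space of complex functions on $G\times Y$ whose inner product is that of $L^2(G\times Y,\nu\otimes\lambda)$, with reproducing kernel $(K_{x,y})_{(x,y)\in G\times Y}$ (so $f(x,y)=\langle f,K_{x,y}\rangle$). Assume $K_{x,y}(u,v)=K_{0,y}(u-x,v)$ for all $u,x\in G$, $v,y\in Y$. For $a\in G$ let $(\rho(a)f)(x,y)=f(x-a,y)$ and $\mathcal C(\rho)=\{S\in\mathcal B(H): S\rho(a)=\rho(a)S\ \forall a\in G\}$. (In the paper, $\psi_T$ is denoted $\Theta^{-1}T$, the inverse of the bijection $\psi\mapsto S_\psi$.) *)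

theory Defs
  imports "HOL-Analysis.Analysis"
begin

definition haar_measure :: "'g::{topological_ab_group_add, t2_space} measure \<Rightarrow> bool" where
  "haar_measure \<nu> \<longleftrightarrow>
     sets \<nu> = sets borel \<and>
     (\<forall>a A. A \<in> sets borel \<longrightarrow> emeasure \<nu> ((\<lambda>x. a + x) ` A) = emeasure \<nu> A) \<and>
     (\<forall>C. compact C \<longrightarrow> emeasure \<nu> C < \<infinity>) \<and>
     (\<forall>U. open U \<and> U \<noteq> {} \<longrightarrow> emeasure \<nu> U > 0) \<and>
     (\<forall>A \<in> sets borel. emeasure \<nu> A = (INF U\<in>{U. open U \<and> A \<subseteq> U}. emeasure \<nu> U)) \<and>
     (\<forall>U. open U \<longrightarrow> emeasure \<nu> U = (SUP C\<in>{C. compact C \<and> C \<subseteq> U}. emeasure \<nu> C))"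

definition L2ip :: "'a measure \<Rightarrow> ('a \<Rightarrow> complex) \<Rightarrow> ('a \<Rightarrow> complex) \<Rightarrow> complex" where
  "L2ip M f g = (\<integral>z. f z * cnj (g z) \<partial>M)"

definition L2norm :: "'a measure \<Rightarrow> ('a \<Rightarrow> complex) \<Rightarrow> real" where
  "L2norm M f = sqrt (\<integral>z. (cmod (f z))\<^sup>2 \<partial>M)"

definition rkhs :: "('g \<times> 'y) measure \<Rightarrow> (('g \<times> 'y) \<Rightarrow> complex) set
                     \<Rightarrow> ('g \<Rightarrow> 'y \<Rightarrow> ('g \<times> 'y) \<Rightarrow> complex) \<Rightarrow> bool" where
  "rkhs M H K \<longleftrightarrow>
     (\<forall>f\<in>H. f \<in> borel_measurable M \<and> integrable M (\<lambda>z. (cmod (f z))\<^sup>2)) \<and>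
     (\<lambda>_. 0) \<in> H \<and>
     (\<forall>f\<in>H. \<forall>g\<in>H. (\<lambda>z. f z + g z) \<in> H) \<and>
     (\<forall>c. \<forall>f\<in>H. (\<lambda>z. c * f z) \<in> H) \<and>
     (\<forall>F. (\<forall>n. F n \<in> H) \<and>
          (\<forall>e>0. \<exists>N. \<forall>m\<ge>N. \<forall>n\<ge>N. L2norm M (\<lambda>z. F m z - F n z) < e)
          \<longrightarrow> (\<exists>f\<in>H. (\<lambda>n. L2norm M (\<lambda>z. F n z - f z)) \<longlonglongrightarrow> 0)) \<and>
     (\<forall>x y. K x y \<in> H) \<and>
     (\<forall>f\<in>H. \<forall>x y. f (x, y) = L2ip M f (K x y))"

definition bounded_op :: "'a measure \<Rightarrow> ('a \<Rightarrow> complex) set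
                          \<Rightarrow> (('a \<Rightarrow> complex) \<Rightarrow> ('a \<Rightarrow> complex)) \<Rightarrow> bool" where
  "bounded_op M H T \<longleftrightarrow>
     (\<forall>f\<in>H. T f \<in> H) \<and>
     (\<forall>f\<in>H. \<forall>g\<in>H. T (\<lambda>z. f z + g z) = (\<lambda>z. T f z + T g z)) \<and>
     (\<forall>c. \<forall>f\<in>H. T (\<lambda>z. c * f z) = (\<lambda>z. c * T f z)) \<and>
     (\<exists>C. \<forall>f\<in>H. L2norm M (T f) \<le> C * L2norm M f)"

definition is_adjoint :: "'a measure \<Rightarrow> ('a \<Rightarrow> complex) set
                          \<Rightarrow> (('a \<Rightarrow> complex) \<Rightarrow> ('a \<Rightarrow> complex))
                          \<Rightarrow> (('a \<Rightarrow> complex) \<Rightarrow> ('a \<Rightarrow> complex)) \<Rightarrow> bool" where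
  "is_adjoint M H T S \<longleftrightarrow>
     (\<forall>g\<in>H. S g \<in> H) \<and> (\<forall>f\<in>H. \<forall>g\<in>H. L2ip M (T f) g = L2ip M f (S g))"

definition rho :: "'g::ab_group_add \<Rightarrow> (('g \<times> 'y) \<Rightarrow> complex) \<Rightarrow> (('g \<times> 'y) \<Rightarrow> complex)" where
  "rho a f = (\<lambda>(x, y). f (x - a, y))"

definition commutant_rho :: "('g::ab_group_add \<times> 'y) measure \<Rightarrow> (('g \<times> 'y) \<Rightarrow> complex) set
                    \<Rightarrow> ((('g \<times> 'y) \<Rightarrow> complex) \<Rightarrow> (('g \<times> 'y) \<Rightarrow> complex)) set" where
  "commutant_rho M H = {S. bounded_op M H S \<and> (\<forall>a. \<forall>f\<in>H. S (rho a f) = rho a (S f))}"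

definition psi :: "('g::zero \<Rightarrow> 'y \<Rightarrow> ('g \<times> 'y) \<Rightarrow> complex)
                   \<Rightarrow> ((('g \<times> 'y) \<Rightarrow> complex) \<Rightarrow> (('g \<times> 'y) \<Rightarrow> complex)) \<Rightarrow> 'g \<Rightarrow> 'y \<Rightarrow> 'y \<Rightarrow> complex" where
  "psi K T u v y = T (K 0 y) (u, v)"

end

theory Submission
  imports Defs
begin

text \<open>By the reproducing property and adjointness,
  \<open>(T\<^sup>* K\<^sub>0\<^sub>,\<^sub>y)(u,v) = \<langle>T\<^sup>* K\<^sub>0\<^sub>,\<^sub>y, K\<^sub>u\<^sub>,\<^sub>v\<rangle> = conj \<langle>T K\<^sub>u\<^sub>,\<^sub>v, K\<^sub>0\<^sub>,\<^sub>y\<rangle> = conj ((T K\<^sub>u\<^sub>,\<^sub>v)(0,y))\<close>,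
  and since \<open>K\<^sub>u\<^sub>,\<^sub>v = \<rho>(u) K\<^sub>0\<^sub>,\<^sub>v\<close> and \<open>T\<close> commutes with \<open>\<rho>(u)\<close>, the last value is
  \<open>conj ((T K\<^sub>0\<^sub>,\<^sub>v)(-u,y))\<close>.\<close>

lemma L2ip_cnj: "L2ip M f g = cnj (L2ip M g f)"
proof -
  have "cnj (L2ip M g f) = (\<integral>z. cnj (g z * cnj (f z)) \<partial>M)"
    unfolding L2ip_def
    by (rule integral_bounded_linear'[OF bounded_linear_cnj bounded_linear_cnj, symmetric]) simp
  then show ?thesis by (simp add: L2ip_def mult.commute)
qed

lemma rkhs_adjoint_kernel_eval:
  assumes "rkhs M H K" and "is_adjoint M H T S" and "\<forall>f\<in>H. T f \<in> H"
  shows "S (K a b) (x, y) = cnj (T (K x y) (a, b))"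
proof -
  have KH: "\<And>x y. K x y \<in> H" and rep: "\<And>f x y. f \<in> H \<Longrightarrow> f (x, y) = L2ip M f (K x y)"
    using assms(1) unfolding rkhs_def by blast+
  have SH: "S (K a b) \<in> H" and adj: "L2ip M (T (K x y)) (K a b) = L2ip M (K x y) (S (K a b))"
    using assms(2) KH unfolding is_adjoint_def by blast+
  have "S (K a b) (x, y) = L2ip M (S (K a b)) (K x y)" by (rule rep[OF SH])
  also have "\<dots> = cnj (L2ip M (K x y) (S (K a b)))" by (rule L2ip_cnj)
  also have "\<dots> = cnj (L2ip M (T (K x y)) (K a b))" by (simp add: adj)
  also have "\<dots> = cnj (T (K x y) (a, b))" using rep assms(3) KH by metis
  finally show ?thesis .
qed

lemma commutant_rho_translated_kernel:
  assumes "T \<in> commutant_rho M H" and "K 0 y \<in> H"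
    and "\<forall>x y s t. K x y (s, t) = K 0 y (s - x, t)"
  shows "T (K x y) (s, t) = T (K 0 y) (s - x, t)"
proof -
  have "K x y = rho x (K 0 y)"
    using assms(3) by (auto simp: rho_def fun_eq_iff)
  moreover have "T (rho x (K 0 y)) = rho x (T (K 0 y))"
    using assms(1,2) unfolding commutant_rho_def by blast
  ultimately show ?thesis by (simp add: rho_def)
qed

theorem corollary5p18:
  fixes \<nu> :: "'g::{topological_ab_group_add, t2_space} measure"
    and lam :: "'y measure"
    and H :: "(('g \<times> 'y) \<Rightarrow> complex) set"
    and K :: "'g \<Rightarrow> 'y \<Rightarrow> ('g \<times> 'y) \<Rightarrow> complex"
    and T Tadj :: "(('g \<times> 'y) \<Rightarrow> complex) \<Rightarrow> (('g \<times> 'y) \<Rightarrow> complex)"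
    and u :: 'g and v y :: 'y
  assumes "locally_compact_space (euclidean :: 'g topology)"
    and "haar_measure \<nu>"
    and "space lam = UNIV"
    and "rkhs (\<nu> \<Otimes>\<^sub>M lam) H K"
    and "\<forall>x y s t. K x y (s, t) = K 0 y (s - x, t)"
    and "T \<in> commutant_rho (\<nu> \<Otimes>\<^sub>M lam) H"
    and "is_adjoint (\<nu> \<Otimes>\<^sub>M lam) H T Tadj"
  shows "psi K Tadj u v y = cnj (T (K 0 v) (- u, y)) \<and>
         cnj (T (K 0 v) (- u, y)) = cnj (psi K T (- u) y v)"
proof -
  have T_into_H: "\<forall>f\<in>H. T f \<in> H"
    using assms(6) unfolding commutant_rho_def bounded_op_def by blast
  have K_in_H: "K 0 v \<in> H"
    using assms(4) unfolding rkhs_def by blast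
  have "psi K Tadj u v y = cnj (T (K u v) (0, y))"
    unfolding psi_def by (rule rkhs_adjoint_kernel_eval[OF assms(4,7) T_into_H])
  also have "T (K u v) (0, y) = T (K 0 v) (- u, y)"
    using commutant_rho_translated_kernel[OF assms(6) K_in_H assms(5), of u 0 y] by simp
  finally show ?thesis by (simp add: psi_def)
qed

end
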